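(* Let $\alpha,\mu$ be partitions with $\mu$ strict. Let $\alpha^-$ be any partition obtained by deleting the top $k$ rows (i.e. the $k$ largest parts) of $\alpha$, where $0\le k<m(\alpha)$. Fix $a>\alpha_1$ and $m>0$ and set $\alpha^+=(a^m,\alpha_1,\alpha_2,\ldots)$. Then: (i) $\alpha$ contains $\mu$ if and only if $\alpha^-$ contains $\mu$; (ii) $\alpha$ contains $\mu$ if and only if $\alpha^+$ contains $\overline\mu$; (iii) for every $c$ with $0<c\le m(\alpha)$, $\alpha$ contains $\mu$ if and only if $\alpha+(1^c)$ contains $\mu+(1)$.
   Context: Partitions are weakly decreasing sequences of nonnegative integers with finitely many nonzero parts, identified with Ferrers boards (row $i$ has $\alpha_i$ boxes). $\alpha$ contains $\mu$ if deleting some rows and some columns of the Ferrers board of $\alpha$ and top/left-justifying yields $\mu$. Strict: positive parts distinct. $m(\alpha)$ is the multiplicity of the largest part of $\alpha$. $(a^m,\alpha_1,\ldots)$ denotes $m$ parts equal to $a$ followed by the parts of $\alpha$. $\alpha+\beta$ is the componentwise sum and $(1^c)$ has $c$ parts equal to $1$. $\overline\mu=(\mu_1+1,\mu_1,\mu_2,\ldots)$. *)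

theory Defs
  imports Main
begin

definition is_partition :: "nat list \<Rightarrow> bool" where
  "is_partition xs \<longleftrightarrow> sorted_wrt (\<ge>) xs \<and> 0 \<notin> set xs"

definition is_strict_partition :: "nat list \<Rightarrow> bool" where
  "is_strict_partition xs \<longleftrightarrow> sorted_wrt (>) xs \<and> 0 \<notin> set xs"

definition part1 :: "nat list \<Rightarrow> nat" where
  "part1 xs = (if xs = [] then 0 else hd xs)"

definition mult_largest :: "nat list \<Rightarrow> nat" where
  "mult_largest xs = length (filter (\<lambda>x. x = part1 xs) xs)"

text \<open>Containment: keep a set I of rows and a set J of columns of the Ferrers board of alpha;
  a kept row i becomes a row with as many boxes as kept columns j < alpha_i;
  empty rows (which are at the bottom) are discarded.\<close>
definition contains :: "nat list \<Rightarrow> nat list \<Rightarrow> bool" where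
  "contains \<alpha> \<mu> \<longleftrightarrow> (\<exists>I J. I \<subseteq> {..<length \<alpha>} \<and>
      filter (\<lambda>x. 0 < x) (map (\<lambda>i. card {j\<in>J. j < \<alpha> ! i}) (sorted_list_of_set I)) = \<mu>)"

definition add_ones :: "nat list \<Rightarrow> nat \<Rightarrow> nat list" where
  "add_ones \<alpha> c = map (\<lambda>i. (if i < length \<alpha> then \<alpha> ! i else 0) + (if i < c then 1 else 0))
                       [0..<max (length \<alpha>) c]"

definition bar :: "nat list \<Rightarrow> nat list" where
  "bar \<mu> = (part1 \<mu> + 1) # \<mu>"

end

theory Submission
  imports Defs "HOL-Library.Sublist"
begin

text \<open>Deleting the columns outside J from the Ferrers board of \<alpha> turns a row of length v into one
  of length g v = #{j \<in> J. j < v}, and these g are exactly the functions with g 0 = 0 and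
  increments 0 or 1. Hence, for \<mu> without zero parts, \<alpha> contains \<mu> iff \<mu> = map g s for such
  a g and a subsequence s of \<alpha>. If \<mu> is strict, s is repetition-free and so uses at most one
  copy of the largest part x of \<alpha> = replicate n x @ r; this gives (i) and reduces (ii) and
  (iii) to the board x # r. There an embedding of y # ys with ys \<le> y is an embedding of ys
  into r with g x \<ge> y (cap g at y). Raising x to x + 1 and y to y + 1 is matched by letting g
  take one more step right after x; conversely g (x + 1) \<ge> y + 1 forces g x \<ge> y, and then no
  remaining row equals x, as its image lies below y.\<close>

lemma set_mono_subseq: "subseq xs ys \<Longrightarrow> set xs \<subseteq> set ys"
  by (auto elim: list_emb_set)

lemma subseq_tl_Cons: "subseq xs (y # ys) \<Longrightarrow> subseq (tl xs) ys"
  by (cases xs) (auto split: if_splits dest: subseq_Cons')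

lemma subseq_replicate_appendE:
  assumes "subseq xs (replicate n x @ ys)"
  obtains k zs where "xs = replicate k x @ zs" "subseq zs ys"
proof -
  obtain us zs where "xs = us @ zs" "subseq us (replicate n x)" "subseq zs ys"
    using assms by (rule subseq_appendE)
  moreover from \<open>subseq us (replicate n x)\<close> have "replicate (length us) x = us"
    by (intro replicate_length_same) (auto dest!: set_mono_subseq split: if_splits)
  ultimately show thesis by (metis that)
qed

lemma subseq_replicate_append_notin:
  assumes "subseq xs (replicate n x @ ys)" "x \<notin> set xs"
  shows "subseq xs ys"
proof -
  obtain k zs where "xs = replicate k x @ zs" "subseq zs ys"
    using assms(1) by (rule subseq_replicate_appendE)
  with assms(2) show ?thesis by (cases k) auto
qed

lemma subseq_replicate_append_distinct:
  assumes "subseq xs (replicate n x @ ys)" "distinct xs"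
  shows "subseq xs (x # ys)"
proof -
  obtain k zs where xs: "xs = replicate k x @ zs" and "subseq zs ys"
    using assms(1) by (rule subseq_replicate_appendE)
  moreover have "k \<le> 1" using assms(2) xs by (cases k) auto
  ultimately show ?thesis by (cases k) auto
qed

lemma sorted_list_of_set_eq_filter_upt:
  assumes "I \<subseteq> {..<n}"
  shows "sorted_list_of_set I = filter (\<lambda>i. i \<in> I) [0..<n]"
proof -
  have "set (filter (\<lambda>i. i \<in> I) [0..<n]) = I" using assms by auto
  then show ?thesis
    using sorted_list_of_set.idem_if_sorted_distinct[of "filter (\<lambda>i. i \<in> I) [0..<n]"]
    by (simp add: sorted_wrt_filter)
qed

lemma nths_eq_map_nth_filter_upt: "nths xs I = map ((!) xs) (filter (\<lambda>i. i \<in> I) [0..<length xs])"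
proof -
  have "zip xs [0..<length xs] = map (\<lambda>i. (xs ! i, i)) [0..<length xs]"
    by (rule nth_equalityI) auto
  then show ?thesis by (simp add: nths_def filter_map o_def)
qed

lemma subseq_iff_map_nth_sorted_list_of_set:
  "subseq s xs \<longleftrightarrow> (\<exists>I \<subseteq> {..<length xs}. s = map ((!) xs) (sorted_list_of_set I))"
proof -
  have "map ((!) xs) (sorted_list_of_set (N \<inter> {..<length xs})) = nths xs N" for N
  proof -
    have "filter (\<lambda>i. i \<in> N \<inter> {..<length xs}) [0..<length xs] = filter (\<lambda>i. i \<in> N) [0..<length xs]"
      by (rule filter_cong) auto
    then show ?thesis
      using sorted_list_of_set_eq_filter_upt[of "N \<inter> {..<length xs}" "length xs"]
      by (simp add: nths_eq_map_nth_filter_upt)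
  qed
  then show ?thesis
    unfolding subseq_conv_nths by (metis inf.absorb_iff1 inf.cobounded2)
qed

definition unit_step :: "(nat \<Rightarrow> nat) \<Rightarrow> bool" where
  "unit_step g \<longleftrightarrow> g 0 = 0 \<and> (\<forall>v. g v \<le> g (Suc v) \<and> g (Suc v) \<le> Suc (g v))"

lemma card_less_Suc: "card {j\<in>J. j < Suc v} = card {j\<in>J. j < v} + (if v \<in> J then 1 else 0)"
proof -
  have "{j\<in>J. j < Suc v} = (if v \<in> J then insert v {j\<in>J. j < v} else {j\<in>J. j < v})"
    by (auto elim: less_SucE)
  then show ?thesis by simp
qed

lemma unit_step_iff_column_count: "unit_step g \<longleftrightarrow> (\<exists>J. g = (\<lambda>v. card {j\<in>J. j < v}))"
proof
  assume g: "unit_step g"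
  define J where "J = {u. g (Suc u) = Suc (g u)}"
  have "card {j\<in>J. j < v} = g v" for v
  proof (induction v)
    case 0
    then show ?case using g by (simp add: unit_step_def)
  next
    case (Suc v)
    have "g v \<le> g (Suc v)" "g (Suc v) \<le> Suc (g v)" using g by (simp_all add: unit_step_def)
    moreover have "card {j\<in>J. j < Suc v} = g v + (if v \<in> J then 1 else 0)"
      by (simp only: card_less_Suc Suc.IH)
    ultimately show ?case by (auto simp: J_def)
  qed
  then have "g = (\<lambda>v. card {j\<in>J. j < v})" by simp
  then show "\<exists>J. g = (\<lambda>v. card {j\<in>J. j < v})" ..
qed (auto simp: unit_step_def card_less_Suc)

lemma unit_step_mono: "unit_step g \<Longrightarrow> mono g"
  by (simp add: unit_step_def mono_iff_le_Suc)

lemma unit_step_min: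
  assumes "unit_step g" shows "unit_step (\<lambda>v. min (g v) t)"
  unfolding unit_step_def
proof (intro conjI allI)
  fix v
  have "g v \<le> g (Suc v)" "g (Suc v) \<le> Suc (g v)" using assms by (simp_all add: unit_step_def)
  then show "min (g v) t \<le> min (g (Suc v)) t" "min (g (Suc v)) t \<le> Suc (min (g v) t)"
    by (auto simp: min_def)
qed (use assms in \<open>simp add: unit_step_def\<close>)

lemma unit_step_freeze: "unit_step g \<Longrightarrow> unit_step (\<lambda>v. if v \<le> h then g v else Suc (g h))"
  unfolding unit_step_def by (auto simp: not_less_eq_eq dest: le_antisym)

definition embeds :: "nat list \<Rightarrow> nat list \<Rightarrow> bool" where
  "embeds \<alpha> \<mu> \<longleftrightarrow> (\<exists>s g. subseq s \<alpha> \<and> unit_step g \<and> map g s = \<mu>)"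

lemma contains_iff_subseq:
  "contains \<alpha> \<mu> \<longleftrightarrow> (\<exists>s g. subseq s \<alpha> \<and> unit_step g \<and> filter (\<lambda>x. 0 < x) (map g s) = \<mu>)"
proof
  assume "contains \<alpha> \<mu>"
  then obtain I J where "I \<subseteq> {..<length \<alpha>}"
    and "filter (\<lambda>x. 0 < x) (map (\<lambda>i. card {j\<in>J. j < \<alpha> ! i}) (sorted_list_of_set I)) = \<mu>"
    unfolding contains_def by blast
  then have "subseq (map ((!) \<alpha>) (sorted_list_of_set I)) \<alpha>"
    and "filter (\<lambda>x. 0 < x) (map (\<lambda>v. card {j\<in>J. j < v}) (map ((!) \<alpha>) (sorted_list_of_set I))) = \<mu>"
    unfolding subseq_iff_map_nth_sorted_list_of_set by (auto simp: comp_def)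
  moreover have "unit_step (\<lambda>v. card {j\<in>J. j < v})"
    unfolding unit_step_iff_column_count by blast
  ultimately show "\<exists>s g. subseq s \<alpha> \<and> unit_step g \<and> filter (\<lambda>x. 0 < x) (map g s) = \<mu>"
    by blast
next
  assume "\<exists>s g. subseq s \<alpha> \<and> unit_step g \<and> filter (\<lambda>x. 0 < x) (map g s) = \<mu>"
  then obtain I J where "I \<subseteq> {..<length \<alpha>}"
    and "filter (\<lambda>x. 0 < x) (map (\<lambda>v. card {j\<in>J. j < v}) (map ((!) \<alpha>) (sorted_list_of_set I))) = \<mu>"
    unfolding subseq_iff_map_nth_sorted_list_of_set unit_step_iff_column_count by blast
  then show "contains \<alpha> \<mu>"
    unfolding contains_def by (auto simp: comp_def)
qed

lemma embedsI: "subseq s \<alpha> \<Longrightarrow> unit_step g \<Longrightarrow> map g s = \<mu> \<Longrightarrow> embeds \<alpha> \<mu>"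
  unfolding embeds_def by blast

lemma embedsE:
  assumes "embeds \<alpha> \<mu>"
  obtains s g where "subseq s \<alpha>" "unit_step g" "map g s = \<mu>"
  using assms unfolding embeds_def by blast

lemma contains_iff_embeds:
  assumes "0 \<notin> set \<mu>"
  shows "contains \<alpha> \<mu> \<longleftrightarrow> embeds \<alpha> \<mu>"
  unfolding contains_iff_subseq
proof (intro iffI; (elim exE conjE embedsE)?)
  fix s g
  assume "subseq s \<alpha>" "unit_step g" "filter (\<lambda>x. 0 < x) (map g s) = \<mu>"
  moreover have "subseq (filter (\<lambda>v. 0 < g v) s) \<alpha>"
    using subseq_filter_left \<open>subseq s \<alpha>\<close> by (rule subseq_order.order_trans)
  moreover have "map g (filter (\<lambda>v. 0 < g v) s) = filter (\<lambda>x. 0 < x) (map g s)"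
    by (simp add: filter_map comp_def)
  ultimately show "embeds \<alpha> \<mu>"
    by (metis embedsI)
next
  fix s g
  assume "subseq s \<alpha>" "unit_step g" "map g s = \<mu>"
  moreover have "filter (\<lambda>x. 0 < x) (map g s) = map g s"
    using assms \<open>map g s = \<mu>\<close> by (auto simp: filter_id_conv) (metis gr0I image_eqI)
  ultimately show "\<exists>s g. subseq s \<alpha> \<and> unit_step g \<and> filter (\<lambda>x. 0 < x) (map g s) = \<mu>"
    by metis
qed

lemma embeds_Nil [simp]: "embeds \<alpha> []"
  by (rule embedsI[of "[]" _ "\<lambda>_. 0"]) (simp_all add: unit_step_def)

lemma embeds_mono:
  assumes "embeds \<beta> \<mu>" "subseq \<beta> \<alpha>"
  shows "embeds \<alpha> \<mu>"
proof -
  obtain s g where "subseq s \<beta>" "unit_step g" "map g s = \<mu>"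
    using assms(1) by (rule embedsE)
  moreover from \<open>subseq s \<beta>\<close> assms(2) have "subseq s \<alpha>"
    by (rule subseq_order.order_trans)
  ultimately show ?thesis by (blast intro: embedsI)
qed

lemma embeds_ConsD:
  assumes "embeds (x # r) (y # ys)"
  shows "embeds r ys"
proof -
  obtain s g where "subseq s (x # r)" "unit_step g" "map g s = y # ys"
    using assms by (rule embedsE)
  moreover from \<open>subseq s (x # r)\<close> have "subseq (tl s) r"
    by (rule subseq_tl_Cons)
  moreover from \<open>map g s = y # ys\<close> have "map g (tl s) = ys"
    by (simp add: map_tl)
  ultimately show ?thesis by (blast intro: embedsI)
qed

lemma embeds_replicate_append_iff:
  assumes "distinct \<mu>" "0 < n"
  shows "embeds (replicate n x @ r) \<mu> \<longleftrightarrow> embeds (x # r) \<mu>"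
proof
  assume "embeds (replicate n x @ r) \<mu>"
  then obtain s g where "subseq s (replicate n x @ r)" "unit_step g" "map g s = \<mu>"
    by (rule embedsE)
  moreover from \<open>map g s = \<mu>\<close> have "distinct s"
    using assms(1) distinct_map by blast
  ultimately show "embeds (x # r) \<mu>"
    by (blast intro: embedsI dest: subseq_replicate_append_distinct)
next
  assume "embeds (x # r) \<mu>"
  moreover have "subseq (x # r) (replicate n x @ r)"
    using assms(2) by (cases n) auto
  ultimately show "embeds (replicate n x @ r) \<mu>" by (rule embeds_mono)
qed

lemma embeds_Cons_zero_iff:
  assumes "0 \<notin> set \<mu>"
  shows "embeds (0 # r) \<mu> \<longleftrightarrow> embeds r \<mu>"
proof
  assume "embeds (0 # r) \<mu>"
  then obtain s g where "subseq s (replicate 1 0 @ r)" "unit_step g" "map g s = \<mu>"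
    by (auto elim: embedsE)
  moreover from this have "0 \<notin> set s"
    using assms by (metis image_eqI list.set_map unit_step_def)
  ultimately show "embeds r \<mu>"
    by (blast intro: embedsI dest: subseq_replicate_append_notin)
qed (auto elim: embeds_mono)

lemma embeds_Cons_iff:
  assumes "\<forall>v\<in>set r. v \<le> x" and "\<forall>w\<in>set ys. w \<le> y"
  shows "embeds (x # r) (y # ys) \<longleftrightarrow>
    (\<exists>s g. subseq s r \<and> unit_step g \<and> map g s = ys \<and> y \<le> g x)"
proof
  assume "embeds (x # r) (y # ys)"
  then obtain s g where s: "subseq s (x # r)" and g: "unit_step g" and sg: "map g s = y # ys"
    by (rule embedsE)
  then obtain w where w: "s = w # tl s" "g w = y" by (cases s) auto
  have "w \<in> set (x # r)"
    using set_mono_subseq[OF s] w(1) by (metis list.set_intros(1) subsetD)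
  then have "w \<le> x" using assms(1) by auto
  then have "y \<le> g x" using unit_step_mono[OF g] w(2) by (auto dest: monoD)
  moreover have "subseq (tl s) r" using s by (rule subseq_tl_Cons)
  moreover have "map g (tl s) = ys" using sg by (simp add: map_tl)
  ultimately show "\<exists>s g. subseq s r \<and> unit_step g \<and> map g s = ys \<and> y \<le> g x"
    using g by blast
next
  assume "\<exists>s g. subseq s r \<and> unit_step g \<and> map g s = ys \<and> y \<le> g x"
  then obtain s g where "subseq s r" "unit_step g" "map g s = ys" "y \<le> g x" by blast
  moreover have "map (\<lambda>v. min (g v) y) s = map g s"
    using \<open>map g s = ys\<close> assms(2) by (auto simp: min_def)
  ultimately show "embeds (x # r) (y # ys)"
    by (intro embedsI[of "x # s" _ "\<lambda>v. min (g v) y"]) (auto intro: unit_step_min)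
qed

lemma embeds_Suc_ConsI:
  assumes "\<forall>v\<in>set r. v \<le> x" and "\<forall>w\<in>set ys. w \<le> y" and "embeds (x # r) (y # ys)"
  shows "embeds (Suc x # r) (Suc y # ys)"
proof -
  obtain s g where s: "subseq s r" and g: "unit_step g" and sg: "map g s = ys" and "y \<le> g x"
    using assms embeds_Cons_iff by blast
  define G where "G v = (if v \<le> x then g v else Suc (g x))" for v
  have "unit_step G" unfolding G_def using g by (rule unit_step_freeze)
  moreover have "\<forall>v\<in>set s. v \<le> x" using set_mono_subseq[OF s] assms(1) by blast
  then have "map G s = ys" using sg by (auto simp: G_def map_eq_conv)
  moreover have "Suc y \<le> G (Suc x)" using \<open>y \<le> g x\<close> by (simp add: G_def)
  moreover have "\<forall>v\<in>set r. v \<le> Suc x" "\<forall>w\<in>set ys. w \<le> Suc y" using assms(1,2) by auto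
  ultimately show ?thesis using s embeds_Cons_iff[of r "Suc x" ys "Suc y"] by blast
qed

lemma embeds_Suc_ConsD:
  assumes "\<forall>v\<in>set r. v \<le> x" and "\<forall>w\<in>set ys. w < y"
    and "embeds (Suc x # replicate j x @ r) (Suc y # ys)"
  shows "embeds (x # r) (y # ys)"
proof -
  obtain s g where s: "subseq s (replicate j x @ r)" and g: "unit_step g"
    and sg: "map g s = ys" and "Suc y \<le> g (Suc x)"
    using assms embeds_Cons_iff[of "replicate j x @ r" "Suc x" ys "Suc y"] by fastforce
  moreover have "g (Suc x) \<le> Suc (g x)" using g by (simp add: unit_step_def)
  ultimately have "y \<le> g x" by simp
  then have "x \<notin> set s" using sg assms(2) by fastforce
  with s have "subseq s r" by (rule subseq_replicate_append_notin)
  moreover have "\<forall>w\<in>set ys. w \<le> y" using assms(2) by (simp add: less_imp_le)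
  ultimately show ?thesis
    using embeds_Cons_iff[OF assms(1)] g sg \<open>y \<le> g x\<close> by blast
qed

lemma sorted_desc_Cons_replicate_decomp:
  fixes x :: "'a::linorder"
  assumes "sorted_wrt (\<ge>) (x # xs)"
  shows "\<exists>n r. x # xs = replicate (Suc n) x @ r \<and> (\<forall>v\<in>set r. v < x)"
  using assms
proof (induction xs)
  case Nil
  show ?case by (intro exI[of _ 0] exI[of _ "[]"]) simp
next
  case (Cons y xs)
  show ?case
  proof (cases "y = x")
    case True
    with Cons obtain n r where "x # xs = replicate (Suc n) x @ r" "\<forall>v\<in>set r. v < x"
      by auto
    with True show ?thesis by (intro exI[of _ "Suc n"] exI[of _ r]) simp
  next
    case False
    with Cons.prems have "\<forall>v\<in>set (y # xs). v < x" by auto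
    then show ?thesis by (intro exI[of _ 0] exI[of _ "y # xs"]) simp
  qed
qed

lemma partition_largest_partsE:
  assumes "is_partition \<alpha>" and "\<alpha> \<noteq> []"
  obtains x n r where "\<alpha> = replicate n x @ r" and "\<forall>v\<in>set r. v < x"
    and "mult_largest \<alpha> = n" and "0 < n"
proof -
  obtain x xs where \<alpha>: "\<alpha> = x # xs" using assms(2) by (cases \<alpha>) auto
  with assms(1) obtain n r where decomp: "\<alpha> = replicate (Suc n) x @ r" "\<forall>v\<in>set r. v < x"
    using sorted_desc_Cons_replicate_decomp[of x xs] by (auto simp: is_partition_def)
  moreover have "filter (\<lambda>v. v = x) r = []" using decomp(2) by (auto simp: filter_empty_conv)
  ultimately have "mult_largest \<alpha> = Suc n"
    by (simp add: mult_largest_def part1_def \<alpha>[symmetric])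
  then show thesis by (rule that[OF decomp]) simp
qed

lemma partition_le_part1: "is_partition \<alpha> \<Longrightarrow> v \<in> set \<alpha> \<Longrightarrow> v \<le> part1 \<alpha>"
  by (cases \<alpha>) (auto simp: is_partition_def part1_def)

lemma strict_partition_le_part1: "is_strict_partition \<mu> \<Longrightarrow> w \<in> set \<mu> \<Longrightarrow> w \<le> part1 \<mu>"
  by (cases \<mu>) (auto simp: is_strict_partition_def part1_def)

lemma add_ones_eq_map_Suc_take:
  "c \<le> length \<alpha> \<Longrightarrow> add_ones \<alpha> c = map Suc (take c \<alpha>) @ drop c \<alpha>"
  by (rule nth_equalityI) (auto simp: add_ones_def nth_append min_def simp del: upt_Suc)

lemma add_ones_Nil: "add_ones [] c = replicate c (Suc 0)"
  by (rule nth_equalityI) (auto simp: add_ones_def simp del: upt_Suc)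

lemma add_ones_Cons_1: "add_ones (y # ys) 1 = Suc y # ys"
  by (simp add: add_ones_eq_map_Suc_take)

lemma strict_partition_nonzero_distinct:
  assumes "is_strict_partition \<mu>"
  shows "0 \<notin> set \<mu>" and "distinct \<mu>"
  using assms unfolding is_strict_partition_def by (induction \<mu>) auto

lemma partition_add_onesE:
  assumes "is_partition \<alpha>" and "0 \<notin> set \<mu>" and "distinct \<mu>"
    and "\<alpha> = [] \<or> c \<le> mult_largest \<alpha>"
  obtains x j r where "\<forall>v\<in>set r. v \<le> x"
    and "add_ones \<alpha> c = replicate c (Suc x) @ replicate j x @ r"
    and "embeds \<alpha> \<mu> \<longleftrightarrow> embeds (x # r) \<mu>"
proof (cases "\<alpha> = []")
  case True
  show thesis
    by (rule that[of "[]" 0 0]) (simp_all add: True add_ones_Nil embeds_Cons_zero_iff assms(2))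
next
  case False
  with assms(1) obtain x n r where \<alpha>: "\<alpha> = replicate n x @ r" "\<forall>v\<in>set r. v < x"
    and "mult_largest \<alpha> = n" and "0 < n"
    by (rule partition_largest_partsE)
  with assms(4) False have "c \<le> n" by simp
  then have "add_ones \<alpha> c = replicate c (Suc x) @ replicate (n - c) x @ r"
    by (simp add: add_ones_eq_map_Suc_take \<alpha>(1))
  moreover have "embeds \<alpha> \<mu> \<longleftrightarrow> embeds (x # r) \<mu>"
    unfolding \<alpha>(1) using assms(3) \<open>0 < n\<close> by (rule embeds_replicate_append_iff)
  ultimately show thesis using that \<alpha>(2) by (meson less_imp_le)
qed

lemma contains_drop_largest_iff:
  assumes "is_partition \<alpha>" and "is_strict_partition \<mu>" and "\<alpha> = [] \<or> k < mult_largest \<alpha>"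
  shows "contains \<alpha> \<mu> \<longleftrightarrow> contains (drop k \<alpha>) \<mu>"
proof (cases "\<alpha> = []")
  case False
  with assms(1) obtain x n r where \<alpha>: "\<alpha> = replicate n x @ r"
    and "mult_largest \<alpha> = n" and "0 < n"
    by (rule partition_largest_partsE)
  with assms(3) False have "k < n" by simp
  then have "drop k \<alpha> = replicate (n - k) x @ r" by (simp add: \<alpha>)
  moreover note \<mu> = strict_partition_nonzero_distinct[OF assms(2)]
  ultimately have "embeds (drop k \<alpha>) \<mu> \<longleftrightarrow> embeds (x # r) \<mu>" "embeds \<alpha> \<mu> \<longleftrightarrow> embeds (x # r) \<mu>"
    using \<open>k < n\<close> by (simp_all add: \<alpha> embeds_replicate_append_iff)
  then show ?thesis by (simp add: contains_iff_embeds \<mu>)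
qed simp

lemma contains_bar_iff:
  assumes "is_partition \<alpha>" and "is_strict_partition \<mu>" and "part1 \<alpha> < a" and "0 < m"
  shows "contains \<alpha> \<mu> \<longleftrightarrow> contains (replicate m a @ \<alpha>) (bar \<mu>)"
proof -
  obtain h where a: "a = Suc h" using assms(3) by (cases a) auto
  have \<alpha>_le: "\<forall>v\<in>set \<alpha>. v \<le> h"
    using partition_le_part1[OF assms(1)] assms(3) a by fastforce
  have \<mu>_le: "\<forall>w\<in>set \<mu>. w \<le> part1 \<mu>"
    using strict_partition_le_part1[OF assms(2)] by blast
  note \<mu> = strict_partition_nonzero_distinct[OF assms(2)]
  with \<mu>_le have bar: "0 \<notin> set (bar \<mu>)" "distinct (bar \<mu>)" by (auto simp: bar_def)
  have "embeds (replicate m a @ \<alpha>) (bar \<mu>) \<longleftrightarrow> embeds (Suc h # \<alpha>) (Suc (part1 \<mu>) # \<mu>)"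
    using embeds_replicate_append_iff[OF bar(2) assms(4)] by (simp add: a bar_def)
  also have "\<dots> \<longleftrightarrow> embeds \<alpha> \<mu>"
  proof
    assume "embeds (Suc h # \<alpha>) (Suc (part1 \<mu>) # \<mu>)"
    then show "embeds \<alpha> \<mu>" by (rule embeds_ConsD)
  next
    assume "embeds \<alpha> \<mu>"
    then obtain s g where s: "subseq s \<alpha>" "unit_step g" "map g s = \<mu>" by (rule embedsE)
    have "part1 \<mu> \<le> g h"
    proof (cases s)
      case Nil
      then show ?thesis using s(3) by (simp add: part1_def)
    next
      case (Cons v s')
      with s(1) \<alpha>_le have "v \<le> h" by (metis list.set_intros(1) set_mono_subseq subsetD)
      then have "g v \<le> g h" using unit_step_mono[OF s(2)] by (rule monoD[rotated])
      with Cons s(3) show ?thesis by (auto simp: part1_def)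
    qed
    with s have "embeds (h # \<alpha>) (part1 \<mu> # \<mu>)"
      using embeds_Cons_iff[OF \<alpha>_le \<mu>_le] by blast
    then show "embeds (Suc h # \<alpha>) (Suc (part1 \<mu>) # \<mu>)"
      by (rule embeds_Suc_ConsI[OF \<alpha>_le \<mu>_le])
  qed
  finally show ?thesis by (simp add: contains_iff_embeds \<mu> bar)
qed

lemma contains_add_ones_iff:
  assumes "is_partition \<alpha>" and "is_strict_partition \<mu>" and "0 < c"
    and "\<alpha> = [] \<or> c \<le> mult_largest \<alpha>"
  shows "contains \<alpha> \<mu> \<longleftrightarrow> contains (add_ones \<alpha> c) (add_ones \<mu> 1)"
proof -
  note \<mu> = strict_partition_nonzero_distinct[OF assms(2)]
  obtain x j r where r_le: "\<forall>v\<in>set r. v \<le> x"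
    and add: "add_ones \<alpha> c = replicate c (Suc x) @ replicate j x @ r"
    and reduce: "embeds \<alpha> \<mu> \<longleftrightarrow> embeds (x # r) \<mu>"
    using assms(1) \<mu> assms(4) by (rule partition_add_onesE)
  show ?thesis
  proof (cases \<mu>)
    case Nil
    have "embeds (x # r) [0]"
      by (rule embedsI[of "[x]" _ "\<lambda>_. 0"]) (simp_all add: unit_step_def)
    with r_le have "embeds (Suc x # r) [Suc 0]" by (intro embeds_Suc_ConsI) auto
    moreover have "subseq (Suc x # r) (add_ones \<alpha> c)"
      unfolding add using assms(3) by (cases c) auto
    ultimately have "embeds (add_ones \<alpha> c) [Suc 0]" by (rule embeds_mono)
    then show ?thesis by (simp add: Nil add_ones_Nil contains_iff_embeds)
  next
    case (Cons y ys)
    have ys_lt: "\<forall>w\<in>set ys. w < y" using assms(2) Cons by (simp add: is_strict_partition_def)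
    then have ys_le: "\<forall>w\<in>set ys. w \<le> y" by (simp add: less_imp_le)
    from ys_lt \<mu> Cons have Suc_y: "0 \<notin> set (Suc y # ys)" "distinct (Suc y # ys)" by auto
    have "embeds (add_ones \<alpha> c) (Suc y # ys) \<longleftrightarrow> embeds (Suc x # replicate j x @ r) (Suc y # ys)"
      unfolding add using Suc_y(2) assms(3) by (rule embeds_replicate_append_iff)
    also have "\<dots> \<longleftrightarrow> embeds (x # r) (y # ys)"
    proof
      assume "embeds (Suc x # replicate j x @ r) (Suc y # ys)"
      then show "embeds (x # r) (y # ys)" by (rule embeds_Suc_ConsD[OF r_le ys_lt])
    next
      assume "embeds (x # r) (y # ys)"
      then have "embeds (Suc x # r) (Suc y # ys)" by (rule embeds_Suc_ConsI[OF r_le ys_le])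
      then show "embeds (Suc x # replicate j x @ r) (Suc y # ys)" by (rule embeds_mono) auto
    qed
    finally have "embeds (add_ones \<alpha> c) (Suc y # ys) \<longleftrightarrow> embeds (x # r) (y # ys)" .
    moreover have "add_ones \<mu> 1 = Suc y # ys" unfolding Cons by (rule add_ones_Cons_1)
    ultimately show ?thesis using reduce Cons Suc_y(1) \<mu>(1) by (simp add: contains_iff_embeds)
  qed
qed

theorem mainTheorem10:
  fixes \<alpha> \<mu> :: "nat list" and k a m :: nat
  assumes "is_partition \<alpha>" and "is_strict_partition \<mu>"
  shows "((\<alpha> = [] \<or> k < mult_largest \<alpha>) \<longrightarrow> (contains \<alpha> \<mu> \<longleftrightarrow> contains (drop k \<alpha>) \<mu>)) \<and>
         (a > part1 \<alpha> \<and> m > 0 \<longrightarrow> (contains \<alpha> \<mu> \<longleftrightarrow> contains (replicate m a @ \<alpha>) (bar \<mu>))) \<and>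
         (\<forall>c. 0 < c \<and> (\<alpha> = [] \<or> c \<le> mult_largest \<alpha>) \<longrightarrow>
            (contains \<alpha> \<mu> \<longleftrightarrow> contains (add_ones \<alpha> c) (add_ones \<mu> 1)))"
  using contains_drop_largest_iff[OF assms] contains_bar_iff[OF assms]
    contains_add_ones_iff[OF assms] by blast

end
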